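(* Let $\{X_t\}_{t\in\mathbb N^+}$ be a real-valued process adapted to a filtration $\{\mathcal F_t\}_{t\in\mathbb N}$ with $\mathcal F_0$ trivial, such that for all $t\in\mathbb N^+$, $\mathbb E[X_t\mid\mathcal F_{t-1}]=\mu$ (an unknown constant) and $\mathbb E[(X_t-\mu)^2\mid\mathcal F_{t-1}]\le\sigma^2$ ($\sigma^2$ known). Let $\alpha\in(0,1)$, let $\{\lambda_t\}_{t\in\mathbb N^+}$ be any predictable process, and let $\phi$ be a Catoni-type influence function. Define $$\mathrm{CI}^{\mathsf C}_t=\left\{m\in\mathbb R:\ -\frac{\sigma^2\sum_{i=1}^t\lambda_i^2}{2}-\log(2/\alpha)\le\sum_{i=1}^t\phi(\lambda_i(X_i-m))\le\frac{\sigma^2\sum_{i=1}^t\lambda_i^2}{2}+\log(2/\alpha)\right\}.$$ Then $\Pr[\forall t\in\mathbb N^+,\ \mu\in\mathrm{CI}^{\mathsf C}_t]\ge1-\alpha$.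
   Context: A process $\{\lambda_t\}$ is predictable if each $\lambda_t$ is $\mathcal F_{t-1}$-measurable. A function $\phi:\mathbb R\to\mathbb R$ is a Catoni-type influence function if it is increasing and $-\log(1-x+x^2/2)\le\phi(x)\le\log(1+x+x^2/2)$ for all $x\in\mathbb R$. *)

theory Defs
  imports "HOL-Probability.Probability"
begin

definition catoni_type :: "(real \<Rightarrow> real) \<Rightarrow> bool" where
  "catoni_type \<phi> \<longleftrightarrow> mono \<phi> \<and>
     (\<forall>x. - ln (1 - x + x^2 / 2) \<le> \<phi> x \<and> \<phi> x \<le> ln (1 + x + x^2 / 2))"

definition CI_catoni ::
  "real \<Rightarrow> real \<Rightarrow> (real \<Rightarrow> real) \<Rightarrow> (nat \<Rightarrow> 'a \<Rightarrow> real) \<Rightarrow> (nat \<Rightarrow> 'a \<Rightarrow> real)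
     \<Rightarrow> nat \<Rightarrow> 'a \<Rightarrow> real set" where
  "CI_catoni \<sigma> \<alpha> \<phi> lam X t \<omega> =
     {m. - (\<sigma>^2 * (\<Sum>i=1..t. (lam i \<omega>)^2)) / 2 - ln (2 / \<alpha>)
            \<le> (\<Sum>i=1..t. \<phi> (lam i \<omega> * (X i \<omega> - m)))
       \<and> (\<Sum>i=1..t. \<phi> (lam i \<omega> * (X i \<omega> - m)))
            \<le> (\<sigma>^2 * (\<Sum>i=1..t. (lam i \<omega>)^2)) / 2 + ln (2 / \<alpha>)}"

end

theory Submission
  imports Defs
begin

text \<open>
  The process \<open>M\<^sub>t = exp (\<Sum>i\<le>t. \<phi> (\<lambda>\<^sub>i (X\<^sub>i - \<mu>)) - \<sigma>\<^sup>2 \<lambda>\<^sub>i\<^sup>2 / 2)\<close> is a nonnegative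
  supermartingale with \<open>M\<^sub>0 = 1\<close>: given \<open>\<F>\<^sub>t\<^sub>-\<^sub>1\<close>, the bound \<open>exp (\<phi> z) \<le> 1 + z + z\<^sup>2/2\<close> at
  \<open>z = \<lambda>\<^sub>t (X\<^sub>t - \<mu>)\<close> has conditional expectation at most \<open>1 + \<sigma>\<^sup>2 \<lambda>\<^sub>t\<^sup>2 / 2 \<le> exp (\<sigma>\<^sup>2 \<lambda>\<^sub>t\<^sup>2 / 2)\<close>.
  By Ville's maximal inequality, \<open>M\<^sub>t\<close> exceeds \<open>2/\<alpha>\<close> for some \<open>t\<close> with probability at most
  \<open>\<alpha>/2\<close>, and this is exactly the event that the upper constraint of \<open>CI\<^sub>t\<close> fails at \<open>\<mu>\<close>. The
  lower constraint is the upper one for the Catoni-type function \<open>x \<mapsto> -\<phi> (-x)\<close> and the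
  weights \<open>-\<lambda>\<^sub>t\<close>; a union bound over the two events concludes.
\<close>

lemma catoni_type_reflect:
  assumes "catoni_type \<phi>"
  shows "catoni_type (\<lambda>x. - \<phi> (- x))"
  using assms unfolding catoni_type_def mono_def
  by (metis add_uminus_conv_diff neg_le_iff_le power2_minus minus_minus)

lemma exp_le_of_le_ln_quadratic:
  fixes z :: real
  assumes "\<phi> z \<le> ln (1 + z + z^2 / 2)"
  shows "exp (\<phi> z) \<le> 1 + z + z^2 / 2"
proof -
  have "0 \<le> (z + 1)^2" by simp
  then have "0 < 1 + z + z^2 / 2" by (simp add: power2_eq_square algebra_simps)
  then show ?thesis using assms by (metis exp_le_cancel_iff exp_ln)
qed

lemma exp_minus_mult_one_plus_le_1: "exp (- a) * (1 + a) \<le> (1 :: real)"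
proof -
  have "exp (- a) * (1 + a) \<le> exp (- a) * exp a"
    using exp_ge_add_one_self[of a] by (intro mult_left_mono) auto
  then show ?thesis
    by (simp add: exp_minus)
qed

lemma nn_integral_le_of_incseq_set_nn_integral_le:
  assumes f: "f \<in> borel_measurable M"
    and A: "incseq A" "\<And>K. A K \<in> sets M" "(\<Union>K. A K) = space M"
    and bound: "\<And>K. (\<integral>\<^sup>+x\<in>A K. f x \<partial>M) \<le> C"
  shows "(\<integral>\<^sup>+x. f x \<partial>M) \<le> C"
proof -
  have "(\<integral>\<^sup>+x. f x \<partial>M) = emeasure (density M f) (\<Union>K. A K)"
    using f by (simp add: A(3) emeasure_density)
  also have "\<dots> = (SUP K. emeasure (density M f) (A K))"
    using A(1,2) by (intro SUP_emeasure_incseq[symmetric]) auto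
  also have "\<dots> \<le> C"
    using f A(2) bound by (intro SUP_least) (simp add: emeasure_density)
  finally show ?thesis .
qed

lemma measurable_filtration_mono:
  assumes "\<And>t. subalgebra M (F t)" and "sets (F s) \<subseteq> sets (F t)" and "f \<in> measurable (F s) N"
  shows "f \<in> measurable (F t) N"
  using measurable_from_subalg[OF _ assms(3)] assms(1)[of s] assms(1)[of t] assms(2)
  by (simp add: subalgebra_def)

lemma integrable_bounded_mult:
  fixes f g :: "'a \<Rightarrow> real"
  assumes "integrable M g" and "f \<in> borel_measurable M" and "\<And>x. \<bar>f x\<bar> \<le> B"
  shows "integrable M (\<lambda>x. f x * g x)"
proof (rule Bochner_Integration.integrable_bound)
  show "integrable M (\<lambda>x. B * g x)"
    using assms(1) by simp
  show "(\<lambda>x. f x * g x) \<in> borel_measurable M"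
    using assms(2) borel_measurable_integrable[OF assms(1)] by (rule borel_measurable_times)
  show "AE x in M. norm (f x * g x) \<le> norm (B * g x)"
  proof (rule AE_I2)
    fix x
    have "\<bar>f x\<bar> * \<bar>g x\<bar> \<le> \<bar>B\<bar> * \<bar>g x\<bar>"
      using order_trans[OF assms(3) abs_ge_self] by (rule mult_right_mono) simp
    then show "norm (f x * g x) \<le> norm (B * g x)"
      by (simp add: abs_mult)
  qed
qed

section \<open>Conditional moments\<close>

context sigma_finite_subalgebra
begin

lemma nn_integral_mult_le_of_nn_cond_exp_le:
  assumes "f \<in> borel_measurable F" and "g \<in> borel_measurable M"
    and "AE x in M. nn_cond_exp M F g x \<le> c"
  shows "(\<integral>\<^sup>+x. f x * g x \<partial>M) \<le> (\<integral>\<^sup>+x. f x * c \<partial>M)"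
proof -
  have "(\<integral>\<^sup>+x. f x * g x \<partial>M) = (\<integral>\<^sup>+x. f x * nn_cond_exp M F g x \<partial>M)"
    using assms(1,2) by (rule nn_cond_exp_intg[symmetric])
  also have "\<dots> \<le> (\<integral>\<^sup>+x. f x * c \<partial>M)"
    by (intro nn_integral_mono_AE eventually_mono[OF assms(3)] mult_left_mono) auto
  finally show ?thesis .
qed

lemma integral_mult_eq_of_real_cond_exp_eq:
  assumes "integrable M (\<lambda>x. f x * g x)" and "f \<in> borel_measurable F" and "g \<in> borel_measurable M"
    and "AE x in M. real_cond_exp M F g x = c"
  shows "(\<integral>x. f x * g x \<partial>M) = (\<integral>x. f x * c \<partial>M)"
proof -
  have [measurable]: "f \<in> borel_measurable M" using measurable_from_subalg[OF subalg assms(2)] .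
  have "(\<integral>x. f x * g x \<partial>M) = (\<integral>x. f x * real_cond_exp M F g x \<partial>M)"
    using assms(1-3) by (rule real_cond_exp_intg(2)[symmetric])
  also have "\<dots> = (\<integral>x. f x * c \<partial>M)"
    using assms(4) by (intro integral_cong_AE) auto
  finally show ?thesis .
qed

end

locale cond_mean_var_bound = finite_measure_subalgebra +
  fixes X :: "'a \<Rightarrow> real" and \<mu> \<sigma> :: real
  assumes integrable_X: "integrable M X"
    and cond_mean: "AE x in M. real_cond_exp M F X x = \<mu>"
    and cond_var: "AE x in M. nn_cond_exp M F (\<lambda>x. ennreal ((X x - \<mu>)^2)) x \<le> ennreal (\<sigma>^2)"
begin

lemma borel_measurable_X [measurable]: "X \<in> borel_measurable M"
  using integrable_X by (rule borel_measurable_integrable)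

lemma integrable_centered_square: "integrable M (\<lambda>x. (X x - \<mu>)^2)"
proof (rule integrableI_nonneg)
  have "(\<integral>\<^sup>+x. 1 * ennreal ((X x - \<mu>)^2) \<partial>M) \<le> (\<integral>\<^sup>+x. 1 * ennreal (\<sigma>^2) \<partial>M)"
    using cond_var by (intro nn_integral_mult_le_of_nn_cond_exp_le) auto
  also have "\<dots> < \<infinity>" using finite_emeasure_space by (simp add: ennreal_mult_eq_top_iff less_top[symmetric])
  finally show "(\<integral>\<^sup>+x. ennreal ((X x - \<mu>)^2) \<partial>M) < \<infinity>" by simp
qed auto

lemma integral_mult_centered_eq_0:
  assumes "f \<in> borel_measurable F" and "\<And>x. \<bar>f x\<bar> \<le> B"
  shows "(\<integral>x. f x * (X x - \<mu>) \<partial>M) = 0"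
proof -
  have [measurable]: "f \<in> borel_measurable M" using measurable_from_subalg[OF subalg assms(1)] .
  have int_fX: "integrable M (\<lambda>x. f x * X x)"
    using integrable_X by (rule integrable_bounded_mult) (use assms(2) in auto)
  have int_f\<mu>: "integrable M (\<lambda>x. f x * \<mu>)"
    by (rule integrable_bounded_mult) (use assms(2) in auto)
  have "(\<integral>x. f x * X x \<partial>M) = (\<integral>x. f x * \<mu> \<partial>M)"
    using int_fX assms(1) borel_measurable_X cond_mean by (rule integral_mult_eq_of_real_cond_exp_eq)
  then show ?thesis
    using int_fX int_f\<mu> by (simp add: right_diff_distrib)
qed

lemma integral_mult_centered_square_le:
  assumes "f \<in> borel_measurable F" and "\<And>x. 0 \<le> f x" and "\<And>x. f x \<le> B"
  shows "(\<integral>x. f x * (X x - \<mu>)^2 \<partial>M) \<le> \<sigma>^2 * (\<integral>x. f x \<partial>M)"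
proof -
  have [measurable]: "f \<in> borel_measurable F" "f \<in> borel_measurable M"
    using assms(1) measurable_from_subalg[OF subalg assms(1)] by auto
  have int_f: "integrable M f"
    by (rule integrable_const_bound[where B = B]) (use assms(2,3) in auto)
  have int_fY: "integrable M (\<lambda>x. f x * (X x - \<mu>)^2)"
    using integrable_centered_square by (rule integrable_bounded_mult) (use assms(2,3) in auto)
  have "ennreal (\<integral>x. f x * (X x - \<mu>)^2 \<partial>M) = (\<integral>\<^sup>+x. ennreal (f x * (X x - \<mu>)^2) \<partial>M)"
    using int_fY by (rule nn_integral_eq_integral[symmetric]) (simp add: assms(2))
  also have "\<dots> = (\<integral>\<^sup>+x. ennreal (f x) * ennreal ((X x - \<mu>)^2) \<partial>M)"
    using assms(2) by (simp add: ennreal_mult)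
  also have "\<dots> \<le> (\<integral>\<^sup>+x. ennreal (f x) * ennreal (\<sigma>^2) \<partial>M)"
    using cond_var by (intro nn_integral_mult_le_of_nn_cond_exp_le) auto
  also have "\<dots> = (\<integral>\<^sup>+x. ennreal (\<sigma>^2 * f x) \<partial>M)"
    using assms(2) by (simp add: ennreal_mult mult.commute)
  also have "\<dots> = ennreal (\<sigma>^2 * (\<integral>x. f x \<partial>M))"
    using int_f assms(2) by (subst nn_integral_eq_integral) auto
  finally show ?thesis
    using assms(2) by (subst (asm) ennreal_le_iff) (auto intro: integral_nonneg_AE)
qed

lemma integral_mult_quadratic_le:
  assumes e: "e \<in> borel_measurable F" "\<And>x. 0 \<le> e x" "\<And>x. e x \<le> B"
    and l: "l \<in> borel_measurable F" "\<And>x. \<bar>l x\<bar> \<le> B"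
  shows "integrable M (\<lambda>x. e x * (1 + l x * (X x - \<mu>) + (l x * (X x - \<mu>))^2 / 2))"
    and "(\<integral>x. e x * (1 + l x * (X x - \<mu>) + (l x * (X x - \<mu>))^2 / 2) \<partial>M)
           \<le> (\<integral>x. e x * (1 + \<sigma>^2 * (l x)^2 / 2) \<partial>M)"
proof -
  note [measurable] = e(1) l(1)
  have [measurable]: "e \<in> borel_measurable M" "l \<in> borel_measurable M"
    using measurable_from_subalg[OF subalg e(1)] measurable_from_subalg[OF subalg l(1)] by auto
  have el_bound: "\<bar>e x * l x\<bar> \<le> B * B" for x
    using e(2,3)[of x] l(2)[of x] by (simp add: abs_mult mult_mono)
  have el2_bounds: "0 \<le> e x * (l x)^2 / 2" "e x * (l x)^2 / 2 \<le> B * B^2" for x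
  proof -
    have "(l x)^2 \<le> B^2" using l(2)[of x] by (metis abs_le_square_iff abs_of_nonneg abs_ge_zero order_trans)
    then have "e x * (l x)^2 \<le> B * B^2" using e(2,3)[of x] by (intro mult_mono) auto
    moreover have "0 \<le> B * B^2" using e(2,3)[of x] by simp
    ultimately show "0 \<le> e x * (l x)^2 / 2" "e x * (l x)^2 / 2 \<le> B * B^2"
      using e(2)[of x] by auto
  qed
  have int_e: "integrable M e"
    by (rule integrable_const_bound[where B = B]) (use e(2,3) in auto)
  have int_el2: "integrable M (\<lambda>x. e x * (l x)^2 / 2)"
    by (rule integrable_const_bound[where B = "B * B^2"]) (use el2_bounds in auto)
  have int_lin: "integrable M (\<lambda>x. e x * l x * (X x - \<mu>))"
    using Bochner_Integration.integrable_diff[OF integrable_X integrable_const]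
    by (rule integrable_bounded_mult) (use el_bound in auto)
  have int_quad: "integrable M (\<lambda>x. e x * (l x)^2 / 2 * (X x - \<mu>)^2)"
    using integrable_centered_square by (rule integrable_bounded_mult) (use el2_bounds in auto)
  have expand: "e x * (1 + l x * (X x - \<mu>) + (l x * (X x - \<mu>))^2 / 2)
      = e x + e x * l x * (X x - \<mu>) + e x * (l x)^2 / 2 * (X x - \<mu>)^2" for x
    by (simp add: power2_eq_square field_simps)
  show "integrable M (\<lambda>x. e x * (1 + l x * (X x - \<mu>) + (l x * (X x - \<mu>))^2 / 2))"
    unfolding expand using int_e int_lin int_quad by simp
  have "(\<integral>x. e x * (1 + l x * (X x - \<mu>) + (l x * (X x - \<mu>))^2 / 2) \<partial>M)
      = (\<integral>x. e x \<partial>M) + (\<integral>x. e x * l x * (X x - \<mu>) \<partial>M) + (\<integral>x. e x * (l x)^2 / 2 * (X x - \<mu>)^2 \<partial>M)"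
    unfolding expand using int_e int_lin int_quad by simp
  also have "(\<integral>x. e x * l x * (X x - \<mu>) \<partial>M) = 0"
    by (rule integral_mult_centered_eq_0[OF _ el_bound]) measurable
  also have "(\<integral>x. e x * (l x)^2 / 2 * (X x - \<mu>)^2 \<partial>M) \<le> \<sigma>^2 * (\<integral>x. e x * (l x)^2 / 2 \<partial>M)"
    by (rule integral_mult_centered_square_le[OF _ el2_bounds]) measurable
  also have "(\<integral>x. e x \<partial>M) + 0 + \<sigma>^2 * (\<integral>x. e x * (l x)^2 / 2 \<partial>M)
             = (\<integral>x. e x + \<sigma>^2 * (e x * (l x)^2 / 2) \<partial>M)"
    by (subst Bochner_Integration.integral_add) (use int_e integrable_mult_right[OF int_el2] in auto)
  also have "\<dots> = (\<integral>x. e x * (1 + \<sigma>^2 * (l x)^2 / 2) \<partial>M)"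
    by (simp add: algebra_simps)
  finally show "(\<integral>x. e x * (1 + l x * (X x - \<mu>) + (l x * (X x - \<mu>))^2 / 2) \<partial>M)
      \<le> (\<integral>x. e x * (1 + \<sigma>^2 * (l x)^2 / 2) \<partial>M)"
    by simp
qed

lemma nn_integral_catoni_factor_le_bounded:
  assumes l: "l \<in> borel_measurable F" "\<And>x. \<bar>l x\<bar> \<le> B"
    and g: "g \<in> borel_measurable F" "\<And>x. 0 \<le> g x" "\<And>x. g x \<le> B"
    and \<phi>: "\<And>z. \<phi> z \<le> ln (1 + z + z^2 / 2)"
  shows "(\<integral>\<^sup>+x. ennreal (g x * exp (\<phi> (l x * (X x - \<mu>)) - \<sigma>^2 * (l x)^2 / 2)) \<partial>M)
           \<le> (\<integral>\<^sup>+x. ennreal (g x) \<partial>M)"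
proof -
  note [measurable] = l(1) g(1)
  have [measurable]: "l \<in> borel_measurable M" "g \<in> borel_measurable M"
    using measurable_from_subalg[OF subalg l(1)] measurable_from_subalg[OF subalg g(1)] by auto
  define a where "a x = \<sigma>^2 * (l x)^2 / 2" for x
  define e where "e x = g x * exp (- a x)" for x
  have e_F: "e \<in> borel_measurable F"
    unfolding e_def a_def by measurable
  have e_bounds: "0 \<le> e x" "e x \<le> B" for x
  proof -
    have "exp (- a x) \<le> 1" unfolding a_def by simp
    then show "0 \<le> e x" "e x \<le> B"
      unfolding e_def using g(2,3)[of x] mult_left_mono[of "exp (- a x)" 1 "g x"] by auto
  qed
  note quadratic = integral_mult_quadratic_le[OF e_F e_bounds l]
  have factor_le: "g x * exp (\<phi> (l x * (X x - \<mu>)) - a x)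
      \<le> e x * (1 + l x * (X x - \<mu>) + (l x * (X x - \<mu>))^2 / 2)" for x
  proof -
    have "g x * exp (\<phi> (l x * (X x - \<mu>)) - a x) = e x * exp (\<phi> (l x * (X x - \<mu>)))"
      unfolding e_def by (simp add: exp_diff exp_minus field_simps)
    also have "\<dots> \<le> e x * (1 + l x * (X x - \<mu>) + (l x * (X x - \<mu>))^2 / 2)"
      using exp_le_of_le_ln_quadratic[OF \<phi>] e_bounds(1) by (rule mult_left_mono)
    finally show ?thesis .
  qed
  have e_a_le_g: "e x * (1 + a x) \<le> g x" for x
    using mult_left_mono[OF exp_minus_mult_one_plus_le_1 g(2)] unfolding e_def by (simp add: mult.assoc)
  have int_ea: "integrable M (\<lambda>x. e x * (1 + a x))"
  proof (rule integrable_const_bound[where B = B])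
    have "0 \<le> e x * (1 + a x)" for x
      using e_bounds(1)[of x] by (simp add: a_def)
    then show "AE x in M. norm (e x * (1 + a x)) \<le> B"
      using e_a_le_g g(3) by (intro AE_I2) (metis abs_of_nonneg real_norm_def order_trans)
    show "(\<lambda>x. e x * (1 + a x)) \<in> borel_measurable M"
      unfolding e_def a_def by measurable
  qed
  have "(\<integral>\<^sup>+x. ennreal (g x * exp (\<phi> (l x * (X x - \<mu>)) - a x)) \<partial>M)
      \<le> (\<integral>\<^sup>+x. ennreal (e x * (1 + l x * (X x - \<mu>) + (l x * (X x - \<mu>))^2 / 2)) \<partial>M)"
    using factor_le by (intro nn_integral_mono ennreal_leI)
  also have "\<dots> = ennreal (\<integral>x. e x * (1 + l x * (X x - \<mu>) + (l x * (X x - \<mu>))^2 / 2) \<partial>M)"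
    using factor_le g(2) by (intro nn_integral_eq_integral quadratic(1) AE_I2)
      (meson exp_ge_zero mult_nonneg_nonneg order_trans)
  also have "\<dots> \<le> ennreal (\<integral>x. e x * (1 + a x) \<partial>M)"
    using quadratic(2) unfolding a_def by (simp add: ennreal_leI mult.assoc)
  also have "\<dots> = (\<integral>\<^sup>+x. ennreal (e x * (1 + a x)) \<partial>M)"
    using e_bounds(1) by (intro nn_integral_eq_integral[symmetric] int_ea AE_I2) (simp add: a_def)
  also have "\<dots> \<le> (\<integral>\<^sup>+x. ennreal (g x) \<partial>M)"
    using e_a_le_g by (intro nn_integral_mono ennreal_leI)
  finally show ?thesis
    unfolding a_def .
qed

lemma nn_integral_catoni_factor_le:
  assumes l: "l \<in> borel_measurable F"
    and G: "G \<in> borel_measurable F" "\<And>x. 0 \<le> G x"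
    and \<phi>: "\<phi> \<in> borel_measurable borel" "\<And>z. \<phi> z \<le> ln (1 + z + z^2 / 2)"
  shows "(\<integral>\<^sup>+x. ennreal (G x * exp (\<phi> (l x * (X x - \<mu>)) - \<sigma>^2 * (l x)^2 / 2)) \<partial>M)
           \<le> (\<integral>\<^sup>+x. ennreal (G x) \<partial>M)"
proof -
  note [measurable] = l G(1) \<phi>(1)
  have [measurable]: "l \<in> borel_measurable M" "G \<in> borel_measurable M"
    using measurable_from_subalg[OF subalg l] measurable_from_subalg[OF subalg G(1)] by auto
  have space_F: "space F = space M"
    using subalg by (simp add: subalgebra_def)
  define r where "r x = exp (\<phi> (l x * (X x - \<mu>)) - \<sigma>^2 * (l x)^2 / 2)" for x
  define A where "A K = {x \<in> space M. G x \<le> real K \<and> \<bar>l x\<bar> \<le> real K}" for K :: nat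
  have [measurable]: "r \<in> borel_measurable M"
    unfolding r_def by measurable
  have A_F [measurable]: "A K \<in> sets F" for K
    unfolding A_def space_F[symmetric] by measurable
  have A_M: "A K \<in> sets M" for K
    using A_F[of K] subalg by (auto simp: subalgebra_def)
  have "incseq A"
    by (auto simp: incseq_def A_def intro: order_trans)
  have "\<exists>K. x \<in> A K" if "x \<in> space M" for x
  proof -
    obtain K :: nat where "max (G x) \<bar>l x\<bar> \<le> real K" using real_arch_simple by blast
    then show ?thesis unfolding A_def using that by auto
  qed
  then have A_space: "(\<Union>K. A K) = space M"
    by (auto simp: A_def)
  have truncated: "(\<integral>\<^sup>+x\<in>A K. ennreal (G x * r x) \<partial>M) \<le> (\<integral>\<^sup>+x. ennreal (G x) \<partial>M)" for K
  proof -
    have l_K: "(\<lambda>x. l x * indicator (A K) x) \<in> borel_measurable F"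
      and G_K: "(\<lambda>x. G x * indicator (A K) x) \<in> borel_measurable F"
      by measurable
    have "(\<integral>\<^sup>+x\<in>A K. ennreal (G x * r x) \<partial>M)
        = (\<integral>\<^sup>+x. ennreal (G x * indicator (A K) x * exp (\<phi> (l x * indicator (A K) x * (X x - \<mu>))
                     - \<sigma>^2 * (l x * indicator (A K) x)^2 / 2)) \<partial>M)"
      by (intro nn_integral_cong) (simp add: r_def split: split_indicator)
    also have "\<dots> \<le> (\<integral>\<^sup>+x. ennreal (G x * indicator (A K) x) \<partial>M)"
      by (rule nn_integral_catoni_factor_le_bounded[where B = "real K", OF l_K _ G_K _ _ \<phi>(2)])
         (auto simp: A_def G(2) split: split_indicator)
    also have "\<dots> \<le> (\<integral>\<^sup>+x. ennreal (G x) \<partial>M)"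
      using G(2) by (intro nn_integral_mono) (simp add: ennreal_leI split: split_indicator)
    finally show ?thesis .
  qed
  have "(\<lambda>x. ennreal (G x * r x)) \<in> borel_measurable M"
    by measurable
  then have "(\<integral>\<^sup>+x. ennreal (G x * r x) \<partial>M) \<le> (\<integral>\<^sup>+x. ennreal (G x) \<partial>M)"
    using \<open>incseq A\<close> A_M A_space truncated by (rule nn_integral_le_of_incseq_set_nn_integral_le)
  then show ?thesis
    unfolding r_def .
qed

end

section \<open>Ville's maximal inequality\<close>

lemma emeasure_exists_gt_eq_first_passage:
  fixes Z :: "nat \<Rightarrow> 'a \<Rightarrow> 'b :: linorder"
  assumes "\<And>k. {x \<in> space M. c < Z k x \<and> (\<forall>j<k. Z j x \<le> c)} \<in> sets M"
  shows "emeasure M {x \<in> space M. \<exists>n. c < Z n x}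
           = (\<Sum>k. emeasure M {x \<in> space M. c < Z k x \<and> (\<forall>j<k. Z j x \<le> c)})"
proof -
  define B where "B k = {x \<in> space M. c < Z k x \<and> (\<forall>j<k. Z j x \<le> c)}" for k
  have "{x \<in> space M. \<exists>n. c < Z n x} = (\<Union>k. B k)"
  proof (intro antisym subsetI)
    fix x assume "x \<in> {x \<in> space M. \<exists>n. c < Z n x}"
    then obtain n where "x \<in> space M" "c < Z n x" by auto
    then have "x \<in> B (LEAST n. c < Z n x)"
      unfolding B_def by (auto intro: LeastI dest: not_less_Least)
    then show "x \<in> (\<Union>k. B k)" by blast
  qed (auto simp: B_def)
  also have "emeasure M \<dots> = (\<Sum>k. emeasure M (B k))"
  proof (intro suminf_emeasure[symmetric])
    show "range B \<subseteq> sets M"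
      using assms by (auto simp: B_def)
    show "disjoint_family B"
    proof (unfold disjoint_family_on_def, intro ballI impI)
      fix m n :: nat assume "m \<noteq> n"
      then consider "m < n" | "n < m" by linarith
      then show "B m \<inter> B n = {}" by cases (force simp: B_def)+
    qed
  qed
  finally show ?thesis
    unfolding B_def .
qed

lemma ville_first_passage_sum:
  fixes Z :: "nat \<Rightarrow> 'a \<Rightarrow> ennreal"
  assumes subalg: "\<And>n. subalgebra M (F n)"
    and mono_F: "\<And>m n. m \<le> n \<Longrightarrow> sets (F m) \<subseteq> sets (F n)"
    and adapted: "\<And>n. Z n \<in> borel_measurable (F n)"
    and supermartingale: "\<And>n A. A \<in> sets (F n) \<Longrightarrow> (\<integral>\<^sup>+x\<in>A. Z (Suc n) x \<partial>M) \<le> (\<integral>\<^sup>+x\<in>A. Z n x \<partial>M)"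
  shows "(\<Sum>k<N. \<integral>\<^sup>+x\<in>{x \<in> space M. c < Z k x \<and> (\<forall>j<k. Z j x \<le> c)}. Z k x \<partial>M)
           \<le> (\<integral>\<^sup>+x. Z 0 x \<partial>M)"
proof -
  have [measurable]: "Z n \<in> borel_measurable M" for n
    using measurable_from_subalg[OF subalg adapted] .
  have Z_F: "Z j \<in> borel_measurable (F n)" if "j \<le> n" for j n
    using subalg mono_F[OF that] adapted by (rule measurable_filtration_mono)
  define B where "B k = {x \<in> space M. c < Z k x \<and> (\<forall>j<k. Z j x \<le> c)}" for k
  define C where "C n = {x \<in> space M. \<forall>j<n. Z j x \<le> c}" for n
  have [measurable]: "C n \<in> sets M" "B n \<in> sets M" for n
    unfolding C_def B_def by measurable
  have C_Suc_F: "C (Suc n) \<in> sets (F n)" for n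
  proof -
    have "C (Suc n) = {x \<in> space (F n). \<forall>j\<in>{..n}. Z j x \<le> c}"
      using subalg[of n] by (auto simp: C_def subalgebra_def less_Suc_eq_le)
    also have "\<dots> \<in> sets (F n)"
      by (intro sets.sets_Collect_finite_All borel_measurable_le Z_F) auto
    finally show ?thesis .
  qed
  have "(\<integral>\<^sup>+x\<in>C N. Z N x \<partial>M) + (\<Sum>k<N. \<integral>\<^sup>+x\<in>B k. Z k x \<partial>M) \<le> (\<integral>\<^sup>+x. Z 0 x \<partial>M)"
  proof (induction N)
    case 0
    show ?case by (simp add: C_def)
  next
    case (Suc N)
    have "C N = C (Suc N) \<union> B N" "C (Suc N) \<inter> B N = {}"
      by (auto simp: C_def B_def less_Suc_eq not_le)
    then have split: "(\<integral>\<^sup>+x\<in>C N. Z N x \<partial>M) = (\<integral>\<^sup>+x\<in>C (Suc N). Z N x \<partial>M) + (\<integral>\<^sup>+x\<in>B N. Z N x \<partial>M)"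
      by (simp add: nn_integral_disjoint_pair)
    have "(\<integral>\<^sup>+x\<in>C (Suc N). Z (Suc N) x \<partial>M) + (\<Sum>k<Suc N. \<integral>\<^sup>+x\<in>B k. Z k x \<partial>M)
        \<le> (\<integral>\<^sup>+x\<in>C (Suc N). Z N x \<partial>M) + (\<integral>\<^sup>+x\<in>B N. Z N x \<partial>M) + (\<Sum>k<N. \<integral>\<^sup>+x\<in>B k. Z k x \<partial>M)"
      using supermartingale[OF C_Suc_F] by (simp add: add_right_mono ac_simps)
    also have "\<dots> = (\<integral>\<^sup>+x\<in>C N. Z N x \<partial>M) + (\<Sum>k<N. \<integral>\<^sup>+x\<in>B k. Z k x \<partial>M)"
      by (simp add: split)
    also have "\<dots> \<le> (\<integral>\<^sup>+x. Z 0 x \<partial>M)"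
      by (rule Suc.IH)
    finally show ?case .
  qed
  then show ?thesis
    unfolding B_def by (rule order_trans[rotated]) simp
qed

lemma ville_inequality:
  fixes Z :: "nat \<Rightarrow> 'a \<Rightarrow> ennreal"
  assumes subalg: "\<And>n. subalgebra M (F n)"
    and mono_F: "\<And>m n. m \<le> n \<Longrightarrow> sets (F m) \<subseteq> sets (F n)"
    and adapted: "\<And>n. Z n \<in> borel_measurable (F n)"
    and supermartingale: "\<And>n A. A \<in> sets (F n) \<Longrightarrow> (\<integral>\<^sup>+x\<in>A. Z (Suc n) x \<partial>M) \<le> (\<integral>\<^sup>+x\<in>A. Z n x \<partial>M)"
  shows "c * emeasure M {x \<in> space M. \<exists>n. c < Z n x} \<le> (\<integral>\<^sup>+x. Z 0 x \<partial>M)"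
proof -
  define B where "B k = {x \<in> space M. c < Z k x \<and> (\<forall>j<k. Z j x \<le> c)}" for k
  have [measurable]: "Z n \<in> borel_measurable M" for n
    using measurable_from_subalg[OF subalg adapted] .
  have "emeasure M {x \<in> space M. \<exists>n. c < Z n x} = (\<Sum>k. emeasure M (B k))"
    unfolding B_def by (rule emeasure_exists_gt_eq_first_passage) measurable
  then have "c * emeasure M {x \<in> space M. \<exists>n. c < Z n x} = (\<Sum>k. c * emeasure M (B k))"
    by simp
  also have "\<dots> \<le> (\<integral>\<^sup>+x. Z 0 x \<partial>M)"
  proof (rule suminf_le_const)
    fix N
    have "(\<Sum>k<N. c * emeasure M (B k)) \<le> (\<Sum>k<N. \<integral>\<^sup>+x\<in>B k. Z k x \<partial>M)"
    proof (intro sum_mono)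
      fix k
      have "c * emeasure M (B k) = (\<integral>\<^sup>+x\<in>B k. c \<partial>M)"
        unfolding B_def by (simp add: nn_integral_cmult_indicator)
      also have "\<dots> \<le> (\<integral>\<^sup>+x\<in>B k. Z k x \<partial>M)"
        by (intro nn_integral_mono) (auto simp: B_def split: split_indicator)
      finally show "c * emeasure M (B k) \<le> (\<integral>\<^sup>+x\<in>B k. Z k x \<partial>M)" .
    qed
    also have "\<dots> \<le> (\<integral>\<^sup>+x. Z 0 x \<partial>M)"
      using ville_first_passage_sum[where M = M and F = F and Z = Z and c = c and N = N,
          OF subalg mono_F adapted supermartingale]
      unfolding B_def .
    finally show "(\<Sum>k<N. c * emeasure M (B k)) \<le> (\<integral>\<^sup>+x. Z 0 x \<partial>M)" .
  qed simp
  finally show ?thesis .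
qed

section \<open>The Catoni supermartingale\<close>

locale bounded_cond_var_sequence = prob_space +
  fixes F :: "nat \<Rightarrow> 'a measure" and X :: "nat \<Rightarrow> 'a \<Rightarrow> real" and \<mu> \<sigma> :: real
  assumes subalg: "\<And>t. subalgebra M (F t)"
    and mono_F: "\<And>s t. s \<le> t \<Longrightarrow> sets (F s) \<subseteq> sets (F t)"
    and adapted: "\<And>t. t \<ge> 1 \<Longrightarrow> X t \<in> borel_measurable (F t)"
    and integrable: "\<And>t. t \<ge> 1 \<Longrightarrow> integrable M (X t)"
    and cond_mean: "\<And>t. t \<ge> 1 \<Longrightarrow> AE \<omega> in M. real_cond_exp M (F (t - 1)) (X t) \<omega> = \<mu>"
    and cond_var: "\<And>t. t \<ge> 1 \<Longrightarrow>
        AE \<omega> in M. nn_cond_exp M (F (t - 1)) (\<lambda>\<omega>. ennreal ((X t \<omega> - \<mu>)^2)) \<omega> \<le> ennreal (\<sigma>^2)"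
begin

lemma cond_mean_var_bound_Suc: "cond_mean_var_bound M (F n) (X (Suc n)) \<mu> \<sigma>"
  using subalg integrable[of "Suc n"] cond_mean[of "Suc n"] cond_var[of "Suc n"]
  by unfold_locales (auto simp: emeasure_space_1)

definition catoni_process :: "(real \<Rightarrow> real) \<Rightarrow> (nat \<Rightarrow> 'a \<Rightarrow> real) \<Rightarrow> nat \<Rightarrow> 'a \<Rightarrow> real" where
  "catoni_process \<phi> lam n x = exp (\<Sum>i=1..n. \<phi> (lam i x * (X i x - \<mu>)) - \<sigma>^2 * (lam i x)^2 / 2)"

lemma catoni_process_Suc:
  "catoni_process \<phi> lam (Suc n) x
     = catoni_process \<phi> lam n x * exp (\<phi> (lam (Suc n) x * (X (Suc n) x - \<mu>)) - \<sigma>^2 * (lam (Suc n) x)^2 / 2)"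
  by (simp add: catoni_process_def exp_add)

lemma catoni_process_gt_iff:
  assumes "0 < c"
  shows "c < catoni_process \<phi> lam n x \<longleftrightarrow>
           \<sigma>^2 * (\<Sum>i=1..n. (lam i x)^2) / 2 + ln c < (\<Sum>i=1..n. \<phi> (lam i x * (X i x - \<mu>)))"
proof -
  have "c < catoni_process \<phi> lam n x \<longleftrightarrow>
          ln c < (\<Sum>i=1..n. \<phi> (lam i x * (X i x - \<mu>)) - \<sigma>^2 * (lam i x)^2 / 2)"
    unfolding catoni_process_def using assms by (subst ln_less_cancel_iff[symmetric]) auto
  then show ?thesis
    by (simp add: sum_subtractf sum_divide_distrib[symmetric] sum_distrib_left[symmetric] algebra_simps)
qed

lemma borel_measurable_catoni_process:
  assumes "\<phi> \<in> borel_measurable borel" and "\<And>t. t \<ge> 1 \<Longrightarrow> lam t \<in> borel_measurable (F (t - 1))"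
  shows "catoni_process \<phi> lam n \<in> borel_measurable (F n)"
proof -
  have "(\<lambda>x. \<phi> (lam i x * (X i x - \<mu>)) - \<sigma>^2 * (lam i x)^2 / 2) \<in> borel_measurable (F n)"
    if "i \<in> {1..n}" for i
  proof -
    have "1 \<le> i" "i \<le> n" "i - 1 \<le> n"
      using that by auto
    have [measurable]: "X i \<in> borel_measurable (F n)"
      using subalg mono_F[OF \<open>i \<le> n\<close>] adapted[OF \<open>1 \<le> i\<close>] by (rule measurable_filtration_mono)
    have [measurable]: "lam i \<in> borel_measurable (F n)"
      using subalg mono_F[OF \<open>i - 1 \<le> n\<close>] assms(2)[OF \<open>1 \<le> i\<close>] by (rule measurable_filtration_mono)
    show ?thesis
      using assms(1) by measurable
  qed
  then show ?thesis
    unfolding catoni_process_def by (intro measurable_compose[OF _ borel_measurable_exp] borel_measurable_sum)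
qed

lemma catoni_process_supermartingale:
  assumes \<phi>: "\<phi> \<in> borel_measurable borel" "\<And>x. \<phi> x \<le> ln (1 + x + x^2 / 2)"
    and predictable: "\<And>t. t \<ge> 1 \<Longrightarrow> lam t \<in> borel_measurable (F (t - 1))"
    and A: "A \<in> sets (F n)"
  shows "(\<integral>\<^sup>+x\<in>A. ennreal (catoni_process \<phi> lam (Suc n) x) \<partial>M)
           \<le> (\<integral>\<^sup>+x\<in>A. ennreal (catoni_process \<phi> lam n x) \<partial>M)"
proof -
  interpret cond_mean_var_bound M "F n" "X (Suc n)" \<mu> \<sigma>
    by (rule cond_mean_var_bound_Suc)
  have [measurable]: "catoni_process \<phi> lam n \<in> borel_measurable (F n)"
    using \<phi>(1) predictable by (rule borel_measurable_catoni_process)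
  have G: "(\<lambda>x. catoni_process \<phi> lam n x * indicator A x) \<in> borel_measurable (F n)"
    using A by measurable
  have "(\<integral>\<^sup>+x\<in>A. ennreal (catoni_process \<phi> lam (Suc n) x) \<partial>M)
      = (\<integral>\<^sup>+x. ennreal (catoni_process \<phi> lam n x * indicator A x
                         * exp (\<phi> (lam (Suc n) x * (X (Suc n) x - \<mu>)) - \<sigma>^2 * (lam (Suc n) x)^2 / 2)) \<partial>M)"
    by (intro nn_integral_cong) (simp add: catoni_process_Suc split: split_indicator)
  also have "\<dots> \<le> (\<integral>\<^sup>+x. ennreal (catoni_process \<phi> lam n x * indicator A x) \<partial>M)"
    using predictable[of "Suc n"]
    by (intro nn_integral_catoni_factor_le[OF _ G _ \<phi>]) (auto simp: catoni_process_def)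
  also have "\<dots> = (\<integral>\<^sup>+x\<in>A. ennreal (catoni_process \<phi> lam n x) \<partial>M)"
    by (intro nn_integral_cong) (simp split: split_indicator)
  finally show ?thesis .
qed

lemma prob_catoni_exceedance_le:
  fixes \<phi> :: "real \<Rightarrow> real" and lam :: "nat \<Rightarrow> 'a \<Rightarrow> real" and c :: real
  defines "E \<equiv> {\<omega> \<in> space M. \<exists>t\<ge>1. \<sigma>^2 * (\<Sum>i=1..t. (lam i \<omega>)^2) / 2 + ln c
                                 < (\<Sum>i=1..t. \<phi> (lam i \<omega> * (X i \<omega> - \<mu>)))}"
  assumes \<phi>: "\<phi> \<in> borel_measurable borel" "\<And>x. \<phi> x \<le> ln (1 + x + x^2 / 2)"
    and predictable: "\<And>t. t \<ge> 1 \<Longrightarrow> lam t \<in> borel_measurable (F (t - 1))"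
    and c: "1 \<le> c"
  shows "E \<in> sets M" and "measure M E \<le> 1 / c"
proof -
  let ?Z = "catoni_process \<phi> lam"
  have Z_F [measurable]: "?Z n \<in> borel_measurable (F n)" for n
    using \<phi>(1) predictable by (rule borel_measurable_catoni_process)
  have [measurable]: "?Z n \<in> borel_measurable M" for n
    using measurable_from_subalg[OF subalg Z_F] .
  have adapted_Z: "(\<lambda>x. ennreal (?Z n x)) \<in> borel_measurable (F n)" for n
    by measurable
  have "ennreal c * emeasure M {x \<in> space M. \<exists>n. ennreal c < ennreal (?Z n x)} \<le> (\<integral>\<^sup>+x. ennreal (?Z 0 x) \<partial>M)"
    using subalg mono_F adapted_Z catoni_process_supermartingale[OF \<phi> predictable]
    by (rule ville_inequality[where F = F and Z = "\<lambda>n x. ennreal (?Z n x)"])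
  also have "\<dots> = 1"
    by (simp add: catoni_process_def emeasure_space_1)
  finally have ville: "ennreal c * emeasure M {x \<in> space M. \<exists>n. c < ?Z n x} \<le> 1"
    using c by (simp add: ennreal_less_iff)
  have "c < ?Z n x \<longleftrightarrow> \<sigma>^2 * (\<Sum>i=1..n. (lam i x)^2) / 2 + ln c < (\<Sum>i=1..n. \<phi> (lam i x * (X i x - \<mu>)))"
    for n x
    using c by (intro catoni_process_gt_iff) simp
  moreover have "\<not> \<sigma>^2 * (\<Sum>i=1..0. (lam i x)^2) / 2 + ln c < (\<Sum>i=1..0. \<phi> (lam i x * (X i x - \<mu>)))" for x
    using c by simp
  ultimately have E_eq: "E = {x \<in> space M. \<exists>n. c < ?Z n x}"
    unfolding E_def by (metis (lifting) less_one not_le)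
  show "E \<in> sets M"
    unfolding E_eq by measurable
  have "ennreal (c * measure M E) \<le> 1"
    using ville c by (simp add: E_eq emeasure_eq_measure ennreal_mult)
  then show "measure M E \<le> 1 / c"
    using c by (simp add: field_simps)
qed

end

section \<open>The confidence sequence\<close>

text \<open>The second conjunct is the first one for \<open>\<lambda>x. - \<phi> (- x)\<close> and \<open>- lam\<close>, left unsimplified so
  that it matches that instance syntactically.\<close>

lemma mem_CI_catoni_iff:
  "m \<in> CI_catoni \<sigma> \<alpha> \<phi> lam X t \<omega> \<longleftrightarrow>
     \<not> \<sigma>^2 * (\<Sum>i=1..t. (lam i \<omega>)^2) / 2 + ln (2 / \<alpha>)
         < (\<Sum>i=1..t. \<phi> (lam i \<omega> * (X i \<omega> - m))) \<and>
     \<not> \<sigma>^2 * (\<Sum>i=1..t. (- lam i \<omega>)^2) / 2 + ln (2 / \<alpha>)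
         < (\<Sum>i=1..t. - \<phi> (- (- lam i \<omega> * (X i \<omega> - m))))"
  by (auto simp: CI_catoni_def sum_negf)

theorem theorem3:
  fixes M :: "'a measure" and F :: "nat \<Rightarrow> 'a measure"
    and X lam :: "nat \<Rightarrow> 'a \<Rightarrow> real" and \<phi> :: "real \<Rightarrow> real"
    and \<mu> \<sigma> \<alpha> :: real
  assumes "prob_space M"
    and subalg: "\<And>t. subalgebra M (F t)"
    and mono_F: "\<And>s t. s \<le> t \<Longrightarrow> sets (F s) \<subseteq> sets (F t)"
    and F0_trivial: "sets (F 0) = {{}, space M}"
    and adapted: "\<And>t. t \<ge> 1 \<Longrightarrow> X t \<in> borel_measurable (F t)"
    and integrable: "\<And>t. t \<ge> 1 \<Longrightarrow> integrable M (X t)"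
    and cond_mean: "\<And>t. t \<ge> 1 \<Longrightarrow> AE \<omega> in M. real_cond_exp M (F (t - 1)) (X t) \<omega> = \<mu>"
    and cond_var: "\<And>t. t \<ge> 1 \<Longrightarrow>
        AE \<omega> in M. nn_cond_exp M (F (t - 1)) (\<lambda>\<omega>. ennreal ((X t \<omega> - \<mu>)^2)) \<omega> \<le> ennreal (\<sigma>^2)"
    and alpha: "0 < \<alpha>" "\<alpha> < 1"
    and predictable: "\<And>t. t \<ge> 1 \<Longrightarrow> lam t \<in> borel_measurable (F (t - 1))"
    and catoni: "catoni_type \<phi>"
  shows "measure M {\<omega> \<in> space M. \<forall>t\<ge>1. \<mu> \<in> CI_catoni \<sigma> \<alpha> \<phi> lam X t \<omega>} \<ge> 1 - \<alpha>"
proof -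
  interpret bounded_cond_var_sequence M F X \<mu> \<sigma>
    by (intro bounded_cond_var_sequence.intro bounded_cond_var_sequence_axioms.intro) fact+
  have catoni_upper: "\<psi> \<in> borel_measurable borel" "\<And>x. \<psi> x \<le> ln (1 + x + x^2 / 2)"
    if "catoni_type \<psi>" for \<psi>
    using that by (auto simp: catoni_type_def intro: borel_measurable_mono)
  have predictable_neg: "(\<lambda>\<omega>. - lam t \<omega>) \<in> borel_measurable (F (t - 1))" if "t \<ge> 1" for t
    using predictable[OF that] by measurable
  have c: "1 \<le> 2 / \<alpha>"
    using alpha by (simp add: le_divide_eq)
  define E where "E \<psi> l = {\<omega> \<in> space M. \<exists>t\<ge>1. \<sigma>^2 * (\<Sum>i=1..t. (l i \<omega>)^2) / 2 + ln (2 / \<alpha>)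
                                      < (\<Sum>i=1..t. \<psi> (l i \<omega> * (X i \<omega> - \<mu>)))}"
    for \<psi> and l :: "nat \<Rightarrow> 'a \<Rightarrow> real"
  let ?E\<^sub>1 = "E \<phi> lam" and ?E\<^sub>2 = "E (\<lambda>x. - \<phi> (- x)) (\<lambda>i \<omega>. - lam i \<omega>)"
  have E\<^sub>1: "?E\<^sub>1 \<in> sets M" "measure M ?E\<^sub>1 \<le> 1 / (2 / \<alpha>)"
    using prob_catoni_exceedance_le[where \<phi> = \<phi> and lam = lam and c = "2 / \<alpha>",
          OF catoni_upper[OF catoni] predictable c]
    by (simp_all only: E_def)
  have E\<^sub>2: "?E\<^sub>2 \<in> sets M" "measure M ?E\<^sub>2 \<le> 1 / (2 / \<alpha>)"
    using prob_catoni_exceedance_le[where \<phi> = "\<lambda>x. - \<phi> (- x)" and lam = "\<lambda>i \<omega>. - lam i \<omega>"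
          and c = "2 / \<alpha>", OF catoni_upper[OF catoni_type_reflect[OF catoni]] predictable_neg c]
    by (simp_all only: E_def)
  have "{\<omega> \<in> space M. \<forall>t\<ge>1. \<mu> \<in> CI_catoni \<sigma> \<alpha> \<phi> lam X t \<omega>} = space M - (?E\<^sub>1 \<union> ?E\<^sub>2)"
    unfolding E_def mem_CI_catoni_iff by blast
  moreover have "measure M (?E\<^sub>1 \<union> ?E\<^sub>2) \<le> \<alpha>"
    using measure_Un_le[OF E\<^sub>1(1) E\<^sub>2(1)] E\<^sub>1(2) E\<^sub>2(2) by simp
  ultimately show ?thesis
    using prob_compl[of "?E\<^sub>1 \<union> ?E\<^sub>2"] E\<^sub>1(1) E\<^sub>2(1) by auto
qed

end
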